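(* Let $G$ be a finite group and $p$ a prime. If $G$ contains a central nonidentity $p$-subgroup, then $\chi(\mathcal F^*_G)=1$ and $\chi(\mathcal L^*_G)=|G:O^pG|^{-1}$.
   Context: $N_G(H,K)=\{g\in G: g^{-1}Hg\le K\}$; $O^p(X)$ is the smallest normal subgroup of $X$ with $p$-group quotient. $\mathcal F^*_G$ and $\mathcal L^*_G$ have as objects the nonidentity $p$-subgroups of $G$, with $\mathcal F^*_G(H,K)=C_G(H)\backslash N_G(H,K)$ and $\mathcal L^*_G(H,K)=O^p(C_G(H))\backslash N_G(H,K)$, composition induced by multiplication. $\chi$ is Leinster's Euler characteristic: for a finite category $\mathcal C$, a weighting is $k^\bullet$ with $\sum_b|\mathcal C(a,b)|k^b=1$ for all $a$, a coweighting is $k_\bullet$ with $\sum_ak_a|\mathcal C(a,b)|=1$ for all $b$, and if both exist $\chi(\mathcal C)=\sum_bk^b=\sum_ak_a$. *)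

theory Defs
  imports "HOL-Algebra.Algebra" "HOL-Computational_Algebra.Primes"
begin

definition p_subgroup :: "('a, 'b) monoid_scheme \<Rightarrow> nat \<Rightarrow> 'a set \<Rightarrow> bool" where
  "p_subgroup G p H \<longleftrightarrow> subgroup H G \<and> finite H \<and> (\<exists>n. card H = p ^ n)"

definition nonid_p_subgroups :: "('a, 'b) monoid_scheme \<Rightarrow> nat \<Rightarrow> 'a set set" where
  "nonid_p_subgroups G p = {H. p_subgroup G p H \<and> H \<noteq> {\<one>\<^bsub>G\<^esub>}}"

definition centralizer :: "('a, 'b) monoid_scheme \<Rightarrow> 'a set \<Rightarrow> 'a set" where
  "centralizer G H = {g \<in> carrier G. \<forall>h\<in>H. g \<otimes>\<^bsub>G\<^esub> h = h \<otimes>\<^bsub>G\<^esub> g}"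

definition transporter :: "('a, 'b) monoid_scheme \<Rightarrow> 'a set \<Rightarrow> 'a set \<Rightarrow> 'a set" where
  "transporter G H K = {g \<in> carrier G. (\<forall>h\<in>H. inv\<^bsub>G\<^esub> g \<otimes>\<^bsub>G\<^esub> h \<otimes>\<^bsub>G\<^esub> g \<in> K)}"

(* O^p(Y) for a subgroup Y of G: the smallest normal subgroup of X with p-group quotient,
   i.e. the intersection of all such normal subgroups; the quotient Y/N is
   the set of cosets N g, g in Y *)
definition Op :: "('a, 'b) monoid_scheme \<Rightarrow> nat \<Rightarrow> 'a set \<Rightarrow> 'a set" where
  "Op G p Y = \<Inter> {N. normal N (G\<lparr>carrier := Y\<rparr>) \<and>
                     (\<exists>n. card ((\<lambda>g. N #>\<^bsub>G\<^esub> g) ` Y) = p ^ n)}"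

(* orbit set A \ B = {A g | g in B} (right cosets A g) *)
definition left_orbits :: "('a, 'b) monoid_scheme \<Rightarrow> 'a set \<Rightarrow> 'a set \<Rightarrow> 'a set set" where
  "left_orbits G A B = (\<lambda>g. A #>\<^bsub>G\<^esub> g) ` B"

definition F_hom :: "('a, 'b) monoid_scheme \<Rightarrow> 'a set \<Rightarrow> 'a set \<Rightarrow> 'a set set" where
  "F_hom G H K = left_orbits G (centralizer G H) (transporter G H K)"

definition L_hom :: "('a, 'b) monoid_scheme \<Rightarrow> nat \<Rightarrow> 'a set \<Rightarrow> 'a set \<Rightarrow> 'a set set" where
  "L_hom G p H K = left_orbits G (Op G p (centralizer G H)) (transporter G H K)"

(* Leinster weightings and coweightings of a finite category, given by its
   (finite) object set and Hm-sets *)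
definition is_weighting :: "'o set \<Rightarrow> ('o \<Rightarrow> 'o \<Rightarrow> 'm set) \<Rightarrow> ('o \<Rightarrow> real) \<Rightarrow> bool" where
  "is_weighting Ob Hm k \<longleftrightarrow> (\<forall>a\<in>Ob. (\<Sum>b\<in>Ob. real (card (Hm a b)) * k b) = 1)"

definition is_coweighting :: "'o set \<Rightarrow> ('o \<Rightarrow> 'o \<Rightarrow> 'm set) \<Rightarrow> ('o \<Rightarrow> real) \<Rightarrow> bool" where
  "is_coweighting Ob Hm k \<longleftrightarrow> (\<forall>b\<in>Ob. (\<Sum>a\<in>Ob. k a * real (card (Hm a b))) = 1)"

definition euler_char_is :: "'o set \<Rightarrow> ('o \<Rightarrow> 'o \<Rightarrow> 'm set) \<Rightarrow> real \<Rightarrow> bool" where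
  "euler_char_is Ob Hm x \<longleftrightarrow>
     (\<exists>k. is_weighting Ob Hm k \<and> (\<Sum>b\<in>Ob. k b) = x) \<and>
     (\<exists>k. is_coweighting Ob Hm k \<and> (\<Sum>a\<in>Ob. k a) = x)"

end

theory Submission
  imports Defs
begin

text \<open>
  For subgroups \<open>A\<^sub>H \<le> C\<^sub>G(H)\<close> chosen compatibly with conjugation, the Hom-set
  \<open>A\<^sub>H\<setminus>N\<^sub>G(H,K)\<close> has \<open>|N\<^sub>G(H,K)|/|A\<^sub>H|\<close> elements; \<open>A\<^sub>H = C\<^sub>G(H)\<close> gives
  \<open>F\<^sup>*\<^sub>G\<close> and \<open>A\<^sub>H = O\<^sup>p(C\<^sub>G(H))\<close> gives \<open>L\<^sup>*\<^sub>G\<close>. Inclusion is triangular on the objects,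
  so there are \<open>k\<close> with \<open>\<Sum>\<^bsub>K \<supseteq> H\<^esub> k\<^sub>K = |A\<^sub>H|/|G|\<close> and \<open>m\<close> with \<open>\<Sum>\<^bsub>H \<subseteq> K\<^esub> m\<^sub>H = 1\<close>.
  Counting \<open>N\<^sub>G(H,K)\<close> element by element shows that \<open>k\<close> is a weighting and
  \<open>H \<mapsto> |A\<^sub>H| m\<^sub>H/|G|\<close> a coweighting, both of total \<open>\<Sum>\<^sub>H m\<^sub>H |A\<^sub>H|/|G|\<close>.
  A central nonidentity \<open>p\<close>-subgroup \<open>Z\<close> makes the poset of objects conical: \<open>H \<mapsto> ZH\<close>
  is the join with \<open>Z\<close> and leaves \<open>C\<^sub>G(H)\<close> unchanged. This collapses the total to
  \<open>|A\<^sub>Z|/|G|\<close>, and \<open>C\<^sub>G(Z) = G\<close> turns it into \<open>1\<close>, resp. \<open>|O\<^sup>p G|/|G|\<close>.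
\<close>

section \<open>Triangular systems on families of finite sets\<close>

lemma triangular_system_solvable:
  fixes R :: "'o \<Rightarrow> 'o \<Rightarrow> bool" and rank :: "'o \<Rightarrow> int" and f :: "'o \<Rightarrow> real"
  assumes "finite S" and refl: "\<forall>a\<in>S. R a a"
    and rank: "\<forall>a\<in>S. \<forall>b\<in>S. R a b \<longrightarrow> a \<noteq> b \<longrightarrow> rank a < rank b"
  shows "\<exists>k. \<forall>a\<in>S. (\<Sum>b\<in>S. if R a b then k b else 0) = f a"
  using \<open>finite S\<close>
proof (induction S rule: finite_remove_induct)
  case empty
  then show ?case by simp
next
  case (remove A)
  define x where "x = arg_min_on rank A"
  have "x \<in> A" and x_minimal: "\<not> (\<exists>y\<in>A. rank y < rank x)"
    using arg_min_if_finite[OF remove(1,2)] by (simp_all add: x_def)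
  obtain k where k: "\<forall>a\<in>A - {x}. (\<Sum>b\<in>A - {x}. if R a b then k b else 0) = f a"
    using remove.IH[OF \<open>x \<in> A\<close>] by blast
  \<comment> \<open>Nothing in \<open>A - {x}\<close> lies below the rank-minimal \<open>x\<close>, so only the row of \<open>x\<close> involves \<open>k x\<close>.\<close>
  define k' where "k' = k(x := f x - (\<Sum>b\<in>A - {x}. if R x b then k b else 0))"
  have rest: "(\<Sum>b\<in>A - {x}. if R a b then k' b else 0) = (\<Sum>b\<in>A - {x}. if R a b then k b else 0)" for a
    by (rule sum.cong) (auto simp: k'_def)
  have "(\<Sum>b\<in>A. if R a b then k' b else 0) = f a" if "a \<in> A" for a
  proof (cases "a = x")
    case True
    have "R x x" using refl \<open>A \<subseteq> S\<close> \<open>x \<in> A\<close> by blast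
    then have "(\<Sum>b\<in>A. if R x b then k' b else 0) = k' x + (\<Sum>b\<in>A - {x}. if R x b then k b else 0)"
      using sum.remove[OF remove(1) \<open>x \<in> A\<close>, of "\<lambda>b. if R x b then k' b else 0"] rest[of x] by simp
    then show ?thesis using True by (simp add: k'_def)
  next
    case False
    then have "\<not> R a x" using rank \<open>A \<subseteq> S\<close> that \<open>x \<in> A\<close> x_minimal by auto
    then show ?thesis
      using sum.remove[OF remove(1) \<open>x \<in> A\<close>, of "\<lambda>b. if R a b then k' b else 0"] rest[of a]
        k False that by simp
  qed
  then show ?case by blast
qed

lemma triangular_system_solvable_dual:
  fixes R :: "'o \<Rightarrow> 'o \<Rightarrow> bool" and rank :: "'o \<Rightarrow> int" and f :: "'o \<Rightarrow> real"
  assumes "finite S" and "\<forall>a\<in>S. R a a"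
    and "\<forall>a\<in>S. \<forall>b\<in>S. R a b \<longrightarrow> a \<noteq> b \<longrightarrow> rank a < rank b"
  shows "\<exists>k. \<forall>b\<in>S. (\<Sum>a\<in>S. if R a b then k a else 0) = f b"
  using triangular_system_solvable[OF assms(1), of "\<lambda>a b. R b a" "\<lambda>a. - rank a" f] assms(2,3)
  by force

lemma subset_triangular_systems_solvable:
  fixes S :: "'a set set" and f :: "'a set \<Rightarrow> real"
  assumes "finite S" and "\<forall>a\<in>S. finite a"
  shows "\<exists>k. \<forall>a\<in>S. (\<Sum>b\<in>S. if a \<subseteq> b then k b else 0) = f a"
    and "\<exists>m. \<forall>b\<in>S. (\<Sum>a\<in>S. if a \<subseteq> b then m a else 0) = f b"
proof -
  have rank: "\<forall>a\<in>S. \<forall>b\<in>S. a \<subseteq> b \<longrightarrow> a \<noteq> b \<longrightarrow> int (card a) < int (card b)"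
    using assms(2) by (auto intro: psubset_card_mono)
  show "\<exists>k. \<forall>a\<in>S. (\<Sum>b\<in>S. if a \<subseteq> b then k b else 0) = f a"
    by (rule triangular_system_solvable[OF assms(1) _ rank]) simp
  show "\<exists>m. \<forall>b\<in>S. (\<Sum>a\<in>S. if a \<subseteq> b then m a else 0) = f b"
    by (rule triangular_system_solvable_dual[OF assms(1) _ rank]) simp
qed

lemma sum_upper_solution_eq:
  fixes S :: "'a set set" and k m f :: "'a set \<Rightarrow> real"
  assumes "finite S"
    and k: "\<forall>a\<in>S. (\<Sum>b\<in>S. if a \<subseteq> b then k b else 0) = f a"
    and m: "\<forall>b\<in>S. (\<Sum>a\<in>S. if a \<subseteq> b then m a else 0) = 1"
  shows "(\<Sum>b\<in>S. k b) = (\<Sum>a\<in>S. m a * f a)"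
proof -
  have "(\<Sum>b\<in>S. k b) = (\<Sum>b\<in>S. k b * (\<Sum>a\<in>S. if a \<subseteq> b then m a else 0))"
    using m by (intro sum.cong refl) auto
  also have "\<dots> = (\<Sum>b\<in>S. \<Sum>a\<in>S. if a \<subseteq> b then m a * k b else 0)"
    by (auto simp: sum_distrib_left intro!: sum.cong)
  also have "\<dots> = (\<Sum>a\<in>S. \<Sum>b\<in>S. if a \<subseteq> b then m a * k b else 0)"
    by (rule sum.swap)
  also have "\<dots> = (\<Sum>a\<in>S. m a * (\<Sum>b\<in>S. if a \<subseteq> b then k b else 0))"
    by (auto simp: sum_distrib_left intro!: sum.cong)
  also have "\<dots> = (\<Sum>a\<in>S. m a * f a)"
    using k by (intro sum.cong refl) auto
  finally show ?thesis .
qed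

text \<open>\<open>J a\<close> is the join of \<open>a\<close> with the cone point \<open>Z\<close>.\<close>

lemma sum_lower_solution_weighted_cone:
  fixes S :: "'a set set" and k m f :: "'a set \<Rightarrow> real" and J :: "'a set \<Rightarrow> 'a set"
  assumes "finite S"
    and k: "\<forall>a\<in>S. (\<Sum>b\<in>S. if a \<subseteq> b then k b else 0) = f a"
    and m: "\<forall>b\<in>S. (\<Sum>a\<in>S. if a \<subseteq> b then m a else 0) = 1"
    and "Z \<in> S"
    and J: "\<forall>a\<in>S. J a \<in> S \<and> f (J a) = f a \<and> (\<forall>b\<in>S. J a \<subseteq> b \<longleftrightarrow> a \<subseteq> b \<and> Z \<subseteq> b)"
  shows "(\<Sum>a\<in>S. m a * f a) = f Z"
proof -
  have f_cone: "f a = (\<Sum>b\<in>S. if a \<subseteq> b \<and> Z \<subseteq> b then k b else 0)" if "a \<in> S" for a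
  proof -
    have "J a \<in> S" and "f (J a) = f a" and "\<forall>b\<in>S. J a \<subseteq> b \<longleftrightarrow> a \<subseteq> b \<and> Z \<subseteq> b"
      using J that by auto
    then have "f a = (\<Sum>b\<in>S. if J a \<subseteq> b then k b else 0)"
      using k by auto
    also have "\<dots> = (\<Sum>b\<in>S. if a \<subseteq> b \<and> Z \<subseteq> b then k b else 0)"
      using \<open>\<forall>b\<in>S. J a \<subseteq> b \<longleftrightarrow> a \<subseteq> b \<and> Z \<subseteq> b\<close> by (intro sum.cong refl) simp
    finally show ?thesis .
  qed
  have "(\<Sum>a\<in>S. m a * f a) = (\<Sum>a\<in>S. \<Sum>b\<in>S. if a \<subseteq> b \<and> Z \<subseteq> b then m a * k b else 0)"
    using f_cone by (auto simp: sum_distrib_left intro!: sum.cong)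
  also have "\<dots> = (\<Sum>b\<in>S. \<Sum>a\<in>S. if a \<subseteq> b \<and> Z \<subseteq> b then m a * k b else 0)"
    by (rule sum.swap)
  also have "\<dots> = (\<Sum>b\<in>S. if Z \<subseteq> b then k b * (\<Sum>a\<in>S. if a \<subseteq> b then m a else 0) else 0)"
    by (auto simp: sum_distrib_left intro!: sum.cong)
  also have "\<dots> = (\<Sum>b\<in>S. if Z \<subseteq> b then k b else 0)"
    using m by (intro sum.cong refl) auto
  also have "\<dots> = f Z"
    using k \<open>Z \<in> S\<close> by simp
  finally show ?thesis .
qed

lemma sum_card_filter_mult_swap:
  fixes k :: "'b \<Rightarrow> real"
  assumes "finite A"
  shows "(\<Sum>b\<in>B. real (card {x \<in> A. P x b}) * k b) = (\<Sum>x\<in>A. \<Sum>b\<in>B. if P x b then k b else 0)"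
proof -
  have "(\<Sum>b\<in>B. real (card {x \<in> A. P x b}) * k b) = (\<Sum>b\<in>B. \<Sum>x\<in>A. if P x b then k b else 0)"
  proof (rule sum.cong[OF refl])
    fix b
    have "(\<Sum>x\<in>A. if P x b then k b else 0) = (\<Sum>x\<in>{x \<in> A. P x b}. k b)"
      by (rule sum.inter_filter[symmetric, OF assms])
    then show "real (card {x \<in> A. P x b}) * k b = (\<Sum>x\<in>A. if P x b then k b else 0)"
      by simp
  qed
  also have "\<dots> = (\<Sum>x\<in>A. \<Sum>b\<in>B. if P x b then k b else 0)"
    by (rule sum.swap)
  finally show ?thesis .
qed

section \<open>Categories whose Hom-sets are orbits on transporters\<close>

text \<open>
  \<open>|Hom a b| = |{x \<in> T. act x a \<subseteq> b}| / W a\<close>, with \<open>act' x\<close> right adjoint to \<open>act x\<close>;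
  in the application \<open>act g\<close> is conjugation by \<open>g\<close> and \<open>act' g\<close> conjugation by \<open>g\<inverse>\<close>.
\<close>

locale transporter_category =
  fixes Ob :: "'s set set" and T :: "'t set"
    and act act' :: "'t \<Rightarrow> 's set \<Rightarrow> 's set"
    and W :: "'s set \<Rightarrow> real" and Hom :: "'s set \<Rightarrow> 's set \<Rightarrow> 'm set"
  assumes finite_Ob: "finite Ob" and finite_T: "finite T" and T_nonempty: "T \<noteq> {}"
    and finite_object: "a \<in> Ob \<Longrightarrow> finite a"
    and act_closed: "x \<in> T \<Longrightarrow> a \<in> Ob \<Longrightarrow> act x a \<in> Ob"
    and act'_closed: "x \<in> T \<Longrightarrow> b \<in> Ob \<Longrightarrow> act' x b \<in> Ob"
    and act_subset_iff: "x \<in> T \<Longrightarrow> a \<in> Ob \<Longrightarrow> b \<in> Ob \<Longrightarrow> act x a \<subseteq> b \<longleftrightarrow> a \<subseteq> act' x b"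
    and W_pos: "a \<in> Ob \<Longrightarrow> W a > 0"
    and W_act: "x \<in> T \<Longrightarrow> a \<in> Ob \<Longrightarrow> W (act x a) = W a"
    and card_Hom: "a \<in> Ob \<Longrightarrow> b \<in> Ob \<Longrightarrow>
      real (card (Hom a b)) * W a = real (card {x \<in> T. act x a \<subseteq> b})"
begin

lemma card_T_pos: "real (card T) > 0"
  using finite_T T_nonempty by (simp add: card_gt_0_iff)

lemma is_weighting_if_upper_sums:
  assumes k: "\<forall>a\<in>Ob. (\<Sum>b\<in>Ob. if a \<subseteq> b then k b else 0) = W a / card T"
  shows "is_weighting Ob Hom k"
  unfolding is_weighting_def
proof
  fix a assume "a \<in> Ob"
  have "W a * (\<Sum>b\<in>Ob. real (card (Hom a b)) * k b)
      = (\<Sum>b\<in>Ob. (real (card (Hom a b)) * W a) * k b)"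
    by (simp add: sum_distrib_left algebra_simps)
  also have "\<dots> = (\<Sum>b\<in>Ob. real (card {x \<in> T. act x a \<subseteq> b}) * k b)"
    using card_Hom \<open>a \<in> Ob\<close> by simp
  also have "\<dots> = (\<Sum>x\<in>T. W a / card T)"
    unfolding sum_card_filter_mult_swap[OF finite_T]
    using k act_closed W_act \<open>a \<in> Ob\<close> by (intro sum.cong refl) auto
  also have "\<dots> = W a"
    using card_T_pos by simp
  finally show "(\<Sum>b\<in>Ob. real (card (Hom a b)) * k b) = 1"
    using W_pos[OF \<open>a \<in> Ob\<close>] by simp
qed

lemma is_coweighting_if_lower_sums:
  assumes m: "\<forall>b\<in>Ob. (\<Sum>a\<in>Ob. if a \<subseteq> b then m a else 0) = 1"
  shows "is_coweighting Ob Hom (\<lambda>a. W a * m a / card T)"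
  unfolding is_coweighting_def
proof
  fix b assume "b \<in> Ob"
  have "(\<Sum>a\<in>Ob. W a * m a / card T * real (card (Hom a b)))
      = (\<Sum>a\<in>Ob. (real (card (Hom a b)) * W a) * m a) / card T"
    by (simp add: sum_divide_distrib algebra_simps)
  also have "\<dots> = (\<Sum>a\<in>Ob. real (card {x \<in> T. act x a \<subseteq> b}) * m a) / card T"
    using card_Hom \<open>b \<in> Ob\<close> by simp
  also have "(\<Sum>a\<in>Ob. real (card {x \<in> T. act x a \<subseteq> b}) * m a)
      = (\<Sum>x\<in>T. \<Sum>a\<in>Ob. if act x a \<subseteq> b then m a else 0)"
    by (rule sum_card_filter_mult_swap[OF finite_T])
  also have "\<dots> = (\<Sum>x\<in>T. \<Sum>a\<in>Ob. if a \<subseteq> act' x b then m a else 0)"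
    using act_subset_iff \<open>b \<in> Ob\<close> by (intro sum.cong refl) auto
  also have "\<dots> = (\<Sum>x\<in>T. 1)"
    using m act'_closed \<open>b \<in> Ob\<close> by (intro sum.cong refl) auto
  also have "\<dots> = card T"
    by simp
  finally show "(\<Sum>a\<in>Ob. W a * m a / card T * real (card (Hom a b))) = 1"
    using card_T_pos by simp
qed

theorem euler_char_is_if_cone:
  assumes "Z \<in> Ob"
    and "\<forall>a\<in>Ob. J a \<in> Ob \<and> W (J a) = W a \<and> (\<forall>b\<in>Ob. J a \<subseteq> b \<longleftrightarrow> a \<subseteq> b \<and> Z \<subseteq> b)"
  shows "euler_char_is Ob Hom (W Z / card T)"
proof -
  have "\<forall>a\<in>Ob. finite a"
    using finite_object by blast
  note solvable = subset_triangular_systems_solvable[OF finite_Ob this]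
  obtain k where k: "\<forall>a\<in>Ob. (\<Sum>b\<in>Ob. if a \<subseteq> b then k b else 0) = W a / card T"
    using solvable(1)[where f = "\<lambda>a. W a / card T"] by blast
  obtain m :: "'s set \<Rightarrow> real" where m: "\<forall>b\<in>Ob. (\<Sum>a\<in>Ob. if a \<subseteq> b then m a else 0) = 1"
    using solvable(2)[where f = "\<lambda>_. 1"] by blast
  have total: "(\<Sum>a\<in>Ob. m a * (W a / card T)) = W Z / card T"
    using sum_lower_solution_weighted_cone[OF finite_Ob k m assms(1), of J] assms(2) by simp
  have "(\<Sum>b\<in>Ob. k b) = W Z / card T"
    using sum_upper_solution_eq[OF finite_Ob k m] total by simp
  moreover have "(\<Sum>a\<in>Ob. W a * m a / card T) = W Z / card T"
    using total by (simp add: mult.commute)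
  ultimately show ?thesis
    unfolding euler_char_is_def
    using is_weighting_if_upper_sums[OF k] is_coweighting_if_lower_sums[OF m] by blast
qed

end

section \<open>Conjugation, centralizers and \<open>O\<^sup>p\<close>\<close>

definition conjugate :: "('a, 'b) monoid_scheme \<Rightarrow> 'a \<Rightarrow> 'a \<Rightarrow> 'a" where
  "conjugate G g x = inv\<^bsub>G\<^esub> g \<otimes>\<^bsub>G\<^esub> x \<otimes>\<^bsub>G\<^esub> g"

definition set_conjugate :: "('a, 'b) monoid_scheme \<Rightarrow> 'a \<Rightarrow> 'a set \<Rightarrow> 'a set" where
  "set_conjugate G g H = conjugate G g ` H"

context group
begin

lemma mult_inv_mult_cancel [simp]: "x \<in> carrier G \<Longrightarrow> y \<in> carrier G \<Longrightarrow> x \<otimes> (inv x \<otimes> y) = y"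
  by (metis inv_closed m_assoc r_inv l_one)

lemma inv_mult_mult_cancel [simp]: "x \<in> carrier G \<Longrightarrow> y \<in> carrier G \<Longrightarrow> inv x \<otimes> (x \<otimes> y) = y"
  by (metis inv_closed m_assoc l_inv l_one)

lemma conjugate_closed [simp]: "g \<in> carrier G \<Longrightarrow> x \<in> carrier G \<Longrightarrow> conjugate G g x \<in> carrier G"
  by (simp add: conjugate_def)

lemma conjugate_mult:
  "g \<in> carrier G \<Longrightarrow> x \<in> carrier G \<Longrightarrow> y \<in> carrier G \<Longrightarrow>
    conjugate G g (x \<otimes> y) = conjugate G g x \<otimes> conjugate G g y"
  by (simp add: conjugate_def m_assoc)

lemma conjugate_inv:
  "g \<in> carrier G \<Longrightarrow> x \<in> carrier G \<Longrightarrow> conjugate G g (inv x) = inv (conjugate G g x)"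
  by (simp add: conjugate_def inv_mult_group m_assoc)

lemma conjugate_inv_conjugate [simp]:
  "g \<in> carrier G \<Longrightarrow> x \<in> carrier G \<Longrightarrow> conjugate G (inv g) (conjugate G g x) = x"
  by (simp add: conjugate_def m_assoc)

lemma conjugate_conjugate_inv [simp]:
  "g \<in> carrier G \<Longrightarrow> x \<in> carrier G \<Longrightarrow> conjugate G g (conjugate G (inv g) x) = x"
  by (simp add: conjugate_def m_assoc)

lemma inj_on_conjugate: "g \<in> carrier G \<Longrightarrow> inj_on (conjugate G g) (carrier G)"
  by (metis conjugate_inv_conjugate inj_on_inverseI)

lemma conjugate_mult_left:
  "x \<in> carrier G \<Longrightarrow> g \<in> carrier G \<Longrightarrow> h \<in> carrier G \<Longrightarrow>
    conjugate G (x \<otimes> g) h = conjugate G g (conjugate G x h)"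
  by (simp add: conjugate_def inv_mult_group m_assoc)

lemma conjugate_centralizer:
  assumes "x \<in> centralizer G H" and "h \<in> H" and "H \<subseteq> carrier G"
  shows "conjugate G x h = h"
proof -
  have "x \<in> carrier G" "h \<in> carrier G" and "h \<otimes> x = x \<otimes> h"
    using assms by (auto simp: centralizer_def)
  then show ?thesis
    by (simp add: conjugate_def m_assoc)
qed

lemma set_conjugate_subset: "H \<subseteq> carrier G \<Longrightarrow> g \<in> carrier G \<Longrightarrow> set_conjugate G g H \<subseteq> carrier G"
  by (auto simp: set_conjugate_def)

lemma card_set_conjugate: "H \<subseteq> carrier G \<Longrightarrow> g \<in> carrier G \<Longrightarrow> card (set_conjugate G g H) = card H"
  unfolding set_conjugate_def by (rule card_image) (meson inj_on_conjugate inj_on_subset)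

lemma set_conjugate_inv_set_conjugate [simp]:
  assumes "H \<subseteq> carrier G" "g \<in> carrier G"
  shows "set_conjugate G (inv g) (set_conjugate G g H) = H"
  using assms unfolding set_conjugate_def image_image by (simp add: subset_iff cong: image_cong)

lemma set_conjugate_set_conjugate_inv [simp]:
  assumes "H \<subseteq> carrier G" "g \<in> carrier G"
  shows "set_conjugate G g (set_conjugate G (inv g) H) = H"
  using assms unfolding set_conjugate_def image_image by (simp add: subset_iff cong: image_cong)

lemma set_conjugate_subset_iff:
  assumes "H \<subseteq> carrier G" "K \<subseteq> carrier G" "g \<in> carrier G"
  shows "set_conjugate G g H \<subseteq> K \<longleftrightarrow> H \<subseteq> set_conjugate G (inv g) K"
proof
  assume "set_conjugate G g H \<subseteq> K"
  then have "set_conjugate G (inv g) (set_conjugate G g H) \<subseteq> set_conjugate G (inv g) K"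
    by (auto simp: set_conjugate_def)
  then show "H \<subseteq> set_conjugate G (inv g) K" using assms by simp
next
  assume "H \<subseteq> set_conjugate G (inv g) K"
  then have "set_conjugate G g H \<subseteq> set_conjugate G g (set_conjugate G (inv g) K)"
    by (auto simp: set_conjugate_def)
  then show "set_conjugate G g H \<subseteq> K" using assms by simp
qed

lemma subgroup_set_conjugate:
  assumes "subgroup H G" "g \<in> carrier G"
  shows "subgroup (set_conjugate G g H) G"
proof (rule subgroupI)
  have H: "H \<subseteq> carrier G" using assms(1) subgroup.subset by blast
  show "set_conjugate G g H \<subseteq> carrier G" using set_conjugate_subset[OF H assms(2)] .
  show "set_conjugate G g H \<noteq> {}" using subgroup.one_closed[OF assms(1)] by (auto simp: set_conjugate_def)
  fix a b assume "a \<in> set_conjugate G g H" "b \<in> set_conjugate G g H"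
  then obtain x y where "x \<in> H" "y \<in> H" "a = conjugate G g x" "b = conjugate G g y"
    by (auto simp: set_conjugate_def)
  moreover have "x \<in> carrier G" "y \<in> carrier G" using \<open>x \<in> H\<close> \<open>y \<in> H\<close> H by auto
  ultimately show "inv a \<in> set_conjugate G g H" and "a \<otimes> b \<in> set_conjugate G g H"
    using assms subgroup.m_inv_closed[OF assms(1)] subgroup.m_closed[OF assms(1)]
    by (auto simp: set_conjugate_def conjugate_inv[symmetric] conjugate_mult[symmetric] intro!: image_eqI)
qed

lemma transporter_eq: "transporter G H K = {g \<in> carrier G. set_conjugate G g H \<subseteq> K}"
  by (auto simp: transporter_def set_conjugate_def conjugate_def)

lemma centralizer_subgroup:
  assumes "H \<subseteq> carrier G"
  shows "subgroup (centralizer G H) G"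
proof (rule subgroupI)
  show "centralizer G H \<subseteq> carrier G" by (auto simp: centralizer_def)
  show "centralizer G H \<noteq> {}" using assms by (auto simp: centralizer_def intro!: exI[of _ \<one>])
  fix a b assume "a \<in> centralizer G H" "b \<in> centralizer G H"
  then have ab: "a \<in> carrier G" "b \<in> carrier G"
    and a_comm: "\<forall>h\<in>H. a \<otimes> h = h \<otimes> a" and b_comm: "\<forall>h\<in>H. b \<otimes> h = h \<otimes> b"
    by (auto simp: centralizer_def)
  have "inv a \<otimes> h = h \<otimes> inv a" if "h \<in> H" for h
  proof -
    have "h \<in> carrier G" using that assms by auto
    then have "inv a \<otimes> h = inv a \<otimes> (h \<otimes> a) \<otimes> inv a" using ab by (simp add: m_assoc)
    also have "\<dots> = inv a \<otimes> (a \<otimes> h) \<otimes> inv a" using a_comm that by simp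
    also have "\<dots> = h \<otimes> inv a" using ab \<open>h \<in> carrier G\<close> by simp
    finally show ?thesis .
  qed
  then show "inv a \<in> centralizer G H" using ab by (auto simp: centralizer_def)
  have "a \<otimes> b \<otimes> h = h \<otimes> (a \<otimes> b)" if "h \<in> H" for h
  proof -
    have "h \<in> carrier G" using that assms by auto
    then have "a \<otimes> b \<otimes> h = a \<otimes> h \<otimes> b" using ab b_comm that by (simp add: m_assoc)
    also have "\<dots> = h \<otimes> (a \<otimes> b)" using ab a_comm that \<open>h \<in> carrier G\<close> by (simp add: m_assoc)
    finally show ?thesis .
  qed
  then show "a \<otimes> b \<in> centralizer G H" using ab by (auto simp: centralizer_def)
qed

lemma centralizer_set_conjugate:
  assumes H: "H \<subseteq> carrier G" and g: "g \<in> carrier G"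
  shows "centralizer G (set_conjugate G g H) = set_conjugate G g (centralizer G H)"
proof -
  have commute_iff: "conjugate G g y \<otimes> conjugate G g h = conjugate G g h \<otimes> conjugate G g y
      \<longleftrightarrow> y \<otimes> h = h \<otimes> y" if "y \<in> carrier G" "h \<in> carrier G" for y h
    using that g inj_onD[OF inj_on_conjugate[OF g]] by (fastforce simp: conjugate_mult[symmetric])
  have "x \<in> centralizer G (set_conjugate G g H) \<longleftrightarrow> x \<in> set_conjugate G g (centralizer G H)"
    if "x \<in> carrier G" for x
  proof -
    define y where "y = conjugate G (inv g) x"
    have "y \<in> carrier G" and x: "x = conjugate G g y" using that g by (simp_all add: y_def)
    have "x \<in> set_conjugate G g (centralizer G H) \<longleftrightarrow> y \<in> centralizer G H"
      using x \<open>y \<in> carrier G\<close> inj_onD[OF inj_on_conjugate[OF g]]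
      by (auto simp: set_conjugate_def centralizer_def)
    then show ?thesis
      using commute_iff[OF \<open>y \<in> carrier G\<close>] H g x \<open>y \<in> carrier G\<close>
      by (auto simp: set_conjugate_def centralizer_def subset_iff)
  qed
  moreover have "centralizer G (set_conjugate G g H) \<subseteq> carrier G"
    and "set_conjugate G g (centralizer G H) \<subseteq> carrier G"
    using set_conjugate_subset[OF _ g] by (auto simp: centralizer_def)
  ultimately show ?thesis by blast
qed

end

definition Op_candidates :: "('a, 'b) monoid_scheme \<Rightarrow> nat \<Rightarrow> 'a set \<Rightarrow> 'a set set" where
  "Op_candidates G p Y = {N. normal N (G\<lparr>carrier := Y\<rparr>) \<and>
                           (\<exists>n. card ((\<lambda>g. N #>\<^bsub>G\<^esub> g) ` Y) = p ^ n)}"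

lemma Op_eq_Inter_Op_candidates: "Op G p Y = \<Inter> (Op_candidates G p Y)"
  by (simp add: Op_def Op_candidates_def)

context group
begin

lemma normal_restrict_iff:
  assumes "subgroup Y G"
  shows "normal N (G\<lparr>carrier := Y\<rparr>) \<longleftrightarrow>
    subgroup N G \<and> N \<subseteq> Y \<and> (\<forall>x\<in>Y. \<forall>n\<in>N. x \<otimes> n \<otimes> inv x \<in> N)"
proof -
  interpret Y: group "G\<lparr>carrier := Y\<rparr>" using subgroup_imp_group[OF assms] .
  have "subgroup N (G\<lparr>carrier := Y\<rparr>) \<longleftrightarrow> subgroup N G \<and> N \<subseteq> Y"
    using incl_subgroup[OF assms] subgroup_incl[OF _ assms] subgroup.subset by force
  then show ?thesis
    unfolding Y.normal_inv_iff using assms by (auto simp: m_inv_consistent)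
qed

lemma self_in_Op_candidates:
  assumes "subgroup Y G"
  shows "Y \<in> Op_candidates G p Y"
proof -
  have "(\<lambda>g. Y #> g) ` Y = {Y}"
    using subgroup.rcos_const[OF assms is_group] subgroup.one_closed[OF assms] by auto
  then show ?thesis
    unfolding Op_candidates_def mem_Collect_eq normal_restrict_iff[OF assms]
    using assms subgroup.m_closed[OF assms] subgroup.m_inv_closed[OF assms]
    by (auto intro!: exI[of _ 0])
qed

lemma Op_candidates_subgroup:
  assumes "subgroup Y G" and "N \<in> Op_candidates G p Y"
  shows "subgroup N G" and "N \<subseteq> Y"
  using assms(2) unfolding Op_candidates_def normal_restrict_iff[OF assms(1)] by auto

lemma subgroup_Op:
  assumes "subgroup Y G"
  shows "subgroup (Op G p Y) G" and "Op G p Y \<subseteq> Y"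
  using self_in_Op_candidates[OF assms] Op_candidates_subgroup[OF assms]
  unfolding Op_eq_Inter_Op_candidates by (auto intro: subgroups_Inter)

lemma set_conjugate_rcos:
  assumes "N \<subseteq> carrier G" "g \<in> carrier G" "x \<in> carrier G"
  shows "set_conjugate G g N #> conjugate G g x = set_conjugate G g (N #> x)"
  using assms by (force simp: set_conjugate_def r_coset_def conjugate_mult subset_iff)

lemma set_conjugate_Op_candidate:
  assumes Y: "subgroup Y G" and g: "g \<in> carrier G" and N: "N \<in> Op_candidates G p Y"
  shows "set_conjugate G g N \<in> Op_candidates G p (set_conjugate G g Y)"
proof -
  let ?c = "set_conjugate G g"
  have "Y \<subseteq> carrier G" using Y subgroup.subset by blast
  have Y': "subgroup (?c Y) G" using subgroup_set_conjugate[OF Y g] .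
  have "subgroup N G" "N \<subseteq> Y" and N_normal: "\<forall>x\<in>Y. \<forall>n\<in>N. x \<otimes> n \<otimes> inv x \<in> N"
    using N unfolding Op_candidates_def normal_restrict_iff[OF Y] by auto
  obtain k where k: "card ((\<lambda>x. N #> x) ` Y) = p ^ k"
    using N unfolding Op_candidates_def by auto
  have "N \<subseteq> carrier G" using \<open>N \<subseteq> Y\<close> \<open>Y \<subseteq> carrier G\<close> by auto
  have "\<forall>x\<in>?c Y. \<forall>n\<in>?c N. x \<otimes> n \<otimes> inv x \<in> ?c N"
  proof (intro ballI)
    fix x n assume "x \<in> ?c Y" "n \<in> ?c N"
    then obtain x' n' where "x' \<in> Y" "x = conjugate G g x'" "n' \<in> N" "n = conjugate G g n'"
      by (auto simp: set_conjugate_def)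
    moreover have "x' \<in> carrier G" "n' \<in> carrier G"
      using \<open>x' \<in> Y\<close> \<open>n' \<in> N\<close> \<open>Y \<subseteq> carrier G\<close> \<open>N \<subseteq> carrier G\<close> by auto
    ultimately have "x \<otimes> n \<otimes> inv x = conjugate G g (x' \<otimes> n' \<otimes> inv x')"
      using g by (simp add: conjugate_mult conjugate_inv)
    moreover have "x' \<otimes> n' \<otimes> inv x' \<in> N" using N_normal \<open>x' \<in> Y\<close> \<open>n' \<in> N\<close> by auto
    ultimately show "x \<otimes> n \<otimes> inv x \<in> ?c N" by (auto simp: set_conjugate_def)
  qed
  then have "normal (?c N) (G\<lparr>carrier := ?c Y\<rparr>)"
    unfolding normal_restrict_iff[OF Y'] using subgroup_set_conjugate[OF \<open>subgroup N G\<close> g] \<open>N \<subseteq> Y\<close>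
    by (auto simp: set_conjugate_def)
  moreover have "card ((\<lambda>x. ?c N #> x) ` ?c Y) = p ^ k"
  proof -
    have "(\<lambda>x. ?c N #> x) ` ?c Y = ?c ` ((\<lambda>x. N #> x) ` Y)"
      unfolding set_conjugate_def[of G g Y] image_image
      using set_conjugate_rcos[OF \<open>N \<subseteq> carrier G\<close> g] \<open>Y \<subseteq> carrier G\<close> by (intro image_cong) auto
    moreover have "inj_on ?c ((\<lambda>x. N #> x) ` Y)"
    proof (rule inj_on_subset)
      show "inj_on ?c (Pow (carrier G))"
        unfolding set_conjugate_def[abs_def] using inj_on_image_Pow[OF inj_on_conjugate[OF g]] .
      show "(\<lambda>x. N #> x) ` Y \<subseteq> Pow (carrier G)"
        using r_coset_subset_G \<open>N \<subseteq> carrier G\<close> \<open>Y \<subseteq> carrier G\<close> by auto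
    qed
    ultimately show ?thesis using k card_image by metis
  qed
  ultimately show ?thesis unfolding Op_candidates_def by blast
qed

lemma Op_candidates_set_conjugate:
  assumes Y: "subgroup Y G" and g: "g \<in> carrier G"
  shows "Op_candidates G p (set_conjugate G g Y) = set_conjugate G g ` Op_candidates G p Y"
proof
  show "set_conjugate G g ` Op_candidates G p Y \<subseteq> Op_candidates G p (set_conjugate G g Y)"
    using set_conjugate_Op_candidate[OF Y g] by auto
  show "Op_candidates G p (set_conjugate G g Y) \<subseteq> set_conjugate G g ` Op_candidates G p Y"
  proof
    fix M assume M: "M \<in> Op_candidates G p (set_conjugate G g Y)"
    have Y': "subgroup (set_conjugate G g Y) G" using subgroup_set_conjugate[OF Y g] .
    have "M \<subseteq> carrier G"
      using Op_candidates_subgroup[OF Y' M] subgroup.subset by blast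
    have "Y \<subseteq> carrier G" using Y subgroup.subset by blast
    have "set_conjugate G (inv g) M \<in> Op_candidates G p Y"
      using set_conjugate_Op_candidate[OF Y' inv_closed[OF g] M] \<open>Y \<subseteq> carrier G\<close> g by simp
    moreover have "M = set_conjugate G g (set_conjugate G (inv g) M)" using \<open>M \<subseteq> carrier G\<close> g by simp
    ultimately show "M \<in> set_conjugate G g ` Op_candidates G p Y" by blast
  qed
qed

lemma Op_set_conjugate:
  assumes Y: "subgroup Y G" and g: "g \<in> carrier G"
  shows "Op G p (set_conjugate G g Y) = set_conjugate G g (Op G p Y)"
proof -
  have "\<forall>N\<in>Op_candidates G p Y. N \<subseteq> carrier G"
    using Op_candidates_subgroup[OF Y] subgroup.subset by blast
  then have "conjugate G g ` \<Inter> (Op_candidates G p Y) = (\<Inter>N\<in>Op_candidates G p Y. conjugate G g ` N)"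
    using image_INT[OF inj_on_conjugate[OF g], of "Op_candidates G p Y" id]
      self_in_Op_candidates[OF Y, of p] by simp
  then show ?thesis
    unfolding Op_eq_Inter_Op_candidates Op_candidates_set_conjugate[OF Y g]
    by (simp add: set_conjugate_def image_image)
qed


section \<open>Counting orbits and products with a central subgroup\<close>

lemma card_left_orbits:
  assumes A: "subgroup A G" and B: "B \<subseteq> carrier G" and "finite (carrier G)"
    and closed: "\<forall>x\<in>A. \<forall>b\<in>B. x \<otimes> b \<in> B"
  shows "card (left_orbits G A B) * card A = card B"
proof -
  have "A \<subseteq> carrier G" using A subgroup.subset by blast
  let ?C = "left_orbits G A B"
  have "finite B" using B \<open>finite (carrier G)\<close> finite_subset by blast
  have C_rcosets: "?C \<subseteq> rcosets A"
    using rcosetsI[OF \<open>A \<subseteq> carrier G\<close>] B by (auto simp: left_orbits_def)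
  have union: "\<Union> ?C = B"
  proof
    show "\<Union> ?C \<subseteq> B" using closed unfolding left_orbits_def r_coset_def by blast
    have "b \<in> A #> b" if "b \<in> B" for b
      using B that by (intro rcos_self[OF _ A]) blast
    then show "B \<subseteq> \<Union> ?C" unfolding left_orbits_def by blast
  qed
  have "card A * card ?C = card (\<Union> ?C)"
  proof (rule card_partition)
    show "finite ?C" using \<open>finite B\<close> by (simp add: left_orbits_def)
    show "finite (\<Union> ?C)" using union \<open>finite B\<close> by simp
    show "card c = card A" if "c \<in> ?C" for c
      using card_rcosets_equal[OF subsetD[OF C_rcosets that] \<open>A \<subseteq> carrier G\<close>] by simp
    show "c1 \<inter> c2 = {}" if "c1 \<in> ?C" "c2 \<in> ?C" "c1 \<noteq> c2" for c1 c2
      using pairwiseD(1)[OF rcos_disjoint[OF A] subsetD[OF C_rcosets that(1)] subsetD[OF C_rcosets that(2)] that(3)]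
      by (simp add: disjnt_def)
  qed
  then show ?thesis using union by (simp add: mult.commute)
qed

lemma card_transporter:
  assumes A: "subgroup A G" and "A \<subseteq> centralizer G H" and "H \<subseteq> carrier G" and "finite (carrier G)"
  shows "card (left_orbits G A (transporter G H K)) * card A = card (transporter G H K)"
proof (rule card_left_orbits[OF A _ \<open>finite (carrier G)\<close>])
  show "transporter G H K \<subseteq> carrier G" by (auto simp: transporter_def)
  show "\<forall>x\<in>A. \<forall>g\<in>transporter G H K. x \<otimes> g \<in> transporter G H K"
  proof (intro ballI)
    fix x g assume "x \<in> A" "g \<in> transporter G H K"
    then have "x \<in> carrier G" "g \<in> carrier G" "set_conjugate G g H \<subseteq> K"
      using A subgroup.subset by (auto simp: transporter_eq)
    have "set_conjugate G (x \<otimes> g) H = set_conjugate G g H"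
      unfolding set_conjugate_def
    proof (rule image_cong[OF refl])
      fix h assume "h \<in> H"
      have "conjugate G x h = h"
        using conjugate_centralizer \<open>h \<in> H\<close> \<open>H \<subseteq> carrier G\<close> \<open>x \<in> A\<close> \<open>A \<subseteq> centralizer G H\<close> by blast
      then show "conjugate G (x \<otimes> g) h = conjugate G g h"
        using conjugate_mult_left \<open>x \<in> carrier G\<close> \<open>g \<in> carrier G\<close> \<open>h \<in> H\<close> \<open>H \<subseteq> carrier G\<close> by auto
    qed
    then show "x \<otimes> g \<in> transporter G H K"
      using \<open>set_conjugate G g H \<subseteq> K\<close> \<open>x \<in> carrier G\<close> \<open>g \<in> carrier G\<close> by (auto simp: transporter_eq)
  qed
qed

lemma card_set_mult_normal:
  assumes "N \<lhd> G" and "subgroup S G"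
  shows "card (N <#> S) * card (N \<inter> S) = card N * card S"
proof -
  interpret second_isomorphism_grp N G S
    using assms by (simp add: second_isomorphism_grp_def second_isomorphism_grp_axioms_def)
  interpret S: group "G\<lparr>carrier := S\<rparr>" using subgroup_imp_group[OF assms(2)] .
  interpret NS: group "G\<lparr>carrier := N <#> S\<rparr>" using subgroup_imp_group[OF normal_set_mult_subgroup] .
  \<comment> \<open>second isomorphism theorem: \<open>S/(N \<inter> S) \<cong> NS/N\<close>\<close>
  define r where "r = card (rcosets\<^bsub>G\<lparr>carrier := S\<rparr>\<^esub> (N \<inter> S))"
  have "r = card (rcosets\<^bsub>G\<lparr>carrier := N <#> S\<rparr>\<^esub> N)"
    using iso_same_card[OF is_isoI[OF normal_intersection_quotient_isom]]
    by (simp add: r_def FactGroup_def)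
  then have "card (N <#> S) = r * card N"
    using NS.lagrange[of N] subgroup_incl[OF normal_imp_subgroup[OF assms(1)] normal_set_mult_subgroup H_contained_in_set_mult]
    by (simp add: order_def)
  moreover have "r * card (N \<inter> S) = card S"
    using S.lagrange[of "N \<inter> S"] normal_imp_subgroup[OF normal_subgrp_intersection_normal]
    by (simp add: r_def order_def Int_commute)
  ultimately show ?thesis
    by (simp add: mult.assoc mult.left_commute)
qed

lemma normal_if_central:
  assumes "subgroup P G" and "P \<subseteq> centralizer G (carrier G)"
  shows "P \<lhd> G"
  unfolding normal_inv_iff
proof (intro conjI assms(1) ballI)
  fix x h assume "x \<in> carrier G" "h \<in> P"
  then have "h \<in> carrier G" and "x \<otimes> h = h \<otimes> x"
    using assms by (auto simp: centralizer_def)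
  then show "x \<otimes> h \<otimes> inv x \<in> P"
    using \<open>x \<in> carrier G\<close> \<open>h \<in> P\<close> by (simp add: m_assoc)
qed

lemma set_mult_subset_subgroup_iff:
  assumes "subgroup H G" and "subgroup K G" and "subgroup L G"
  shows "H <#> K \<subseteq> L \<longleftrightarrow> H \<subseteq> L \<and> K \<subseteq> L"
proof
  have "H \<subseteq> H <#> K" and "K \<subseteq> H <#> K"
    using assms(1,2) subgroup.one_closed subgroup.subset
    by (force simp: set_mult_def)+
  then show "H <#> K \<subseteq> L \<Longrightarrow> H \<subseteq> L \<and> K \<subseteq> L" by blast
  show "H \<subseteq> L \<and> K \<subseteq> L \<Longrightarrow> H <#> K \<subseteq> L"
    using subgroup.m_closed[OF assms(3)] by (auto simp: set_mult_def)
qed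

lemma centralizer_set_mult_central:
  assumes "subgroup P G" and "P \<subseteq> centralizer G (carrier G)" and "H \<subseteq> carrier G"
  shows "centralizer G (P <#> H) = centralizer G H"
proof
  have "H \<subseteq> P <#> H"
    using assms(3) subgroup.one_closed[OF assms(1)] by (force simp: set_mult_def)
  then show "centralizer G (P <#> H) \<subseteq> centralizer G H" by (auto simp: centralizer_def)
  show "centralizer G H \<subseteq> centralizer G (P <#> H)"
  proof
    fix x assume "x \<in> centralizer G H"
    then have x: "x \<in> carrier G" and x_comm: "\<forall>k\<in>H. x \<otimes> k = k \<otimes> x"
      by (auto simp: centralizer_def)
    have "x \<otimes> (h \<otimes> k) = (h \<otimes> k) \<otimes> x" if "h \<in> P" "k \<in> H" for h k
    proof -
      have "h \<in> carrier G" "k \<in> carrier G" and h_comm: "x \<otimes> h = h \<otimes> x"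
        using that assms x by (auto simp: centralizer_def)
      then have "x \<otimes> (h \<otimes> k) = h \<otimes> (x \<otimes> k)" using x by (simp add: m_assoc[symmetric])
      also have "\<dots> = (h \<otimes> k) \<otimes> x"
        using x_comm that \<open>h \<in> carrier G\<close> \<open>k \<in> carrier G\<close> x by (simp add: m_assoc)
      finally show ?thesis .
    qed
    then show "x \<in> centralizer G (P <#> H)" using x by (auto simp: centralizer_def set_mult_def)
  qed
qed

lemma card_set_mult_prime_power:
  assumes "Factorial_Ring.prime p" and "N \<lhd> G" and "subgroup S G"
    and "card N = p ^ i" and "card S = p ^ j"
  shows "\<exists>n. card (N <#> S) = p ^ n"
proof -
  have "card (N <#> S) dvd p ^ (i + j)"
    using card_set_mult_normal[OF assms(2,3)] assms(4,5) by (metis dvd_triv_left power_add)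
  then show ?thesis using divides_primepow_nat[OF assms(1)] by blast
qed


section \<open>Euler characteristics of the categories of nonidentity \<open>p\<close>-subgroups\<close>

lemma finite_nonid_p_subgroups:
  assumes "finite (carrier G)"
  shows "finite (nonid_p_subgroups G p)"
proof (rule finite_subset)
  show "nonid_p_subgroups G p \<subseteq> Pow (carrier G)"
    by (auto simp: nonid_p_subgroups_def p_subgroup_def dest: subgroup.subset)
qed (use assms in simp)

lemma set_conjugate_in_nonid_p_subgroups:
  assumes "g \<in> carrier G" and "H \<in> nonid_p_subgroups G p"
  shows "set_conjugate G g H \<in> nonid_p_subgroups G p"
proof -
  have H: "subgroup H G" "finite H" "\<exists>n. card H = p ^ n" "H \<noteq> {\<one>}"
    using assms(2) by (auto simp: nonid_p_subgroups_def p_subgroup_def)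
  have "H \<subseteq> carrier G" using H(1) subgroup.subset by blast
  have "set_conjugate G g H \<noteq> {\<one>}"
  proof
    assume "set_conjugate G g H = {\<one>}"
    then have "H = set_conjugate G (inv g) {\<one>}"
      using set_conjugate_inv_set_conjugate[OF \<open>H \<subseteq> carrier G\<close> assms(1)] by simp
    then show False using H(4) assms(1) by (simp add: set_conjugate_def conjugate_def)
  qed
  then show ?thesis
    using H subgroup_set_conjugate[OF H(1) assms(1)] card_set_conjugate[OF \<open>H \<subseteq> carrier G\<close> assms(1)]
    by (simp add: nonid_p_subgroups_def p_subgroup_def set_conjugate_def)
qed

lemma central_set_mult_in_nonid_p_subgroups:
  assumes "finite (carrier G)" and "Factorial_Ring.prime p"
    and P: "P \<in> nonid_p_subgroups G p" and "P \<subseteq> centralizer G (carrier G)"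
    and H: "H \<in> nonid_p_subgroups G p"
  shows "P <#> H \<in> nonid_p_subgroups G p"
proof -
  obtain i j where "subgroup P G" "card P = p ^ i" "P \<noteq> {\<one>}" "subgroup H G" "card H = p ^ j"
    using P H by (auto simp: nonid_p_subgroups_def p_subgroup_def)
  have "P \<lhd> G" using normal_if_central \<open>subgroup P G\<close> assms(4) by blast
  then have "subgroup (P <#> H) G"
    using second_isomorphism_grp.normal_set_mult_subgroup \<open>subgroup H G\<close>
    by (auto simp: second_isomorphism_grp_def second_isomorphism_grp_axioms_def)
  moreover have "P \<subseteq> P <#> H"
    using set_mult_subset_subgroup_iff[OF \<open>subgroup P G\<close> \<open>subgroup H G\<close> calculation] by blast
  then have "P <#> H \<noteq> {\<one>}"
    using \<open>P \<noteq> {\<one>}\<close> subgroup.one_closed[OF \<open>subgroup P G\<close>] by blast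
  moreover have "finite (P <#> H)"
    using calculation(1) assms(1) subgroup.subset finite_subset by blast
  ultimately show ?thesis
    using card_set_mult_prime_power[OF assms(2) \<open>P \<lhd> G\<close> \<open>subgroup H G\<close> \<open>card P = p ^ i\<close> \<open>card H = p ^ j\<close>]
    by (simp add: nonid_p_subgroups_def p_subgroup_def)
qed

theorem euler_char_is_centralizer_orbit_category:
  fixes B :: "'a set \<Rightarrow> 'a set"
  assumes fin: "finite (carrier G)" and "Factorial_Ring.prime p"
    and P: "P \<in> nonid_p_subgroups G p" and P_central: "P \<subseteq> centralizer G (carrier G)"
    and B_subgroup: "\<And>Y. subgroup Y G \<Longrightarrow> subgroup (B Y) G \<and> B Y \<subseteq> Y"
    and B_conjugate: "\<And>Y g. subgroup Y G \<Longrightarrow> g \<in> carrier G \<Longrightarrow>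
      B (set_conjugate G g Y) = set_conjugate G g (B Y)"
  shows "euler_char_is (nonid_p_subgroups G p)
    (\<lambda>H K. left_orbits G (B (centralizer G H)) (transporter G H K))
    (card (B (carrier G)) / card (carrier G))"
proof -
  let ?Ob = "nonid_p_subgroups G p"
  have Ob_carrier: "H \<subseteq> carrier G" if "H \<in> ?Ob" for H
    using that subgroup.subset by (auto simp: nonid_p_subgroups_def p_subgroup_def)
  have B_centralizer: "subgroup (B (centralizer G H)) G" "B (centralizer G H) \<subseteq> centralizer G H"
    if "H \<subseteq> carrier G" for H
    using B_subgroup[OF centralizer_subgroup[OF that]] by auto
  interpret transporter_category ?Ob "carrier G" "set_conjugate G" "\<lambda>g. set_conjugate G (inv g)"
    "\<lambda>H. real (card (B (centralizer G H)))"
    "\<lambda>H K. left_orbits G (B (centralizer G H)) (transporter G H K)"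
  proof
    show "finite ?Ob" using finite_nonid_p_subgroups[OF fin] .
    show "finite H" if "H \<in> ?Ob" for H
      using that by (simp add: nonid_p_subgroups_def p_subgroup_def)
    show "set_conjugate G g H \<subseteq> K \<longleftrightarrow> H \<subseteq> set_conjugate G (inv g) K"
      if "g \<in> carrier G" "H \<in> ?Ob" "K \<in> ?Ob" for g H K
      using set_conjugate_subset_iff Ob_carrier that by blast
    show "0 < real (card (B (centralizer G H)))" if "H \<in> ?Ob" for H
      using B_centralizer(1)[OF Ob_carrier[OF that]] fin subgroup.subset subgroup.one_closed
      by (metis card_gt_0_iff empty_iff finite_subset of_nat_0_less_iff)
    show "real (card (B (centralizer G (set_conjugate G g H)))) = real (card (B (centralizer G H)))"
      if "g \<in> carrier G" "H \<in> ?Ob" for g H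
    proof -
      have "H \<subseteq> carrier G" using Ob_carrier[OF that(2)] .
      then have "B (centralizer G (set_conjugate G g H)) = set_conjugate G g (B (centralizer G H))"
        using centralizer_set_conjugate B_conjugate[OF centralizer_subgroup] that(1) by simp
      moreover have "B (centralizer G H) \<subseteq> carrier G"
        using B_centralizer(1)[OF \<open>H \<subseteq> carrier G\<close>] subgroup.subset by blast
      ultimately show ?thesis using card_set_conjugate that(1) by simp
    qed
    show "real (card (left_orbits G (B (centralizer G H)) (transporter G H K))) * real (card (B (centralizer G H)))
        = real (card {g \<in> carrier G. set_conjugate G g H \<subseteq> K})"
      if "H \<in> ?Ob" "K \<in> ?Ob" for H K
      using card_transporter[OF B_centralizer[OF Ob_carrier[OF that(1)]] Ob_carrier[OF that(1)] fin]
      unfolding transporter_eq by (simp only: of_nat_mult[symmetric] of_nat_eq_iff)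
  qed (use fin set_conjugate_in_nonid_p_subgroups in auto)
  have "euler_char_is ?Ob (\<lambda>H K. left_orbits G (B (centralizer G H)) (transporter G H K))
      (card (B (centralizer G P)) / card (carrier G))"
  proof (rule euler_char_is_if_cone[OF P])
    show "\<forall>H\<in>?Ob. P <#> H \<in> ?Ob \<and> real (card (B (centralizer G (P <#> H)))) = real (card (B (centralizer G H)))
        \<and> (\<forall>K\<in>?Ob. P <#> H \<subseteq> K \<longleftrightarrow> H \<subseteq> K \<and> P \<subseteq> K)"
    proof
      fix H assume "H \<in> ?Ob"
      have "subgroup P G" "subgroup H G"
        using P \<open>H \<in> ?Ob\<close> by (auto simp: nonid_p_subgroups_def p_subgroup_def)
      have "subgroup K G" if "K \<in> ?Ob" for K
        using that by (simp add: nonid_p_subgroups_def p_subgroup_def)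
      then show "P <#> H \<in> ?Ob \<and> real (card (B (centralizer G (P <#> H)))) = real (card (B (centralizer G H)))
          \<and> (\<forall>K\<in>?Ob. P <#> H \<subseteq> K \<longleftrightarrow> H \<subseteq> K \<and> P \<subseteq> K)"
        using central_set_mult_in_nonid_p_subgroups[OF fin \<open>Factorial_Ring.prime p\<close> P P_central \<open>H \<in> ?Ob\<close>]
          centralizer_set_mult_central[OF \<open>subgroup P G\<close> P_central Ob_carrier[OF \<open>H \<in> ?Ob\<close>]]
          set_mult_subset_subgroup_iff[OF \<open>subgroup P G\<close> \<open>subgroup H G\<close>]
        by (simp add: conj_commute)
    qed
  qed
  moreover have "centralizer G P = carrier G"
    using P_central by (auto simp: centralizer_def)
  ultimately show ?thesis by simp
qed

end

theorem proposition5p1: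
  fixes G :: "('a, 'b) monoid_scheme" and p :: nat
  assumes "group G" and "finite (carrier G)" and "Factorial_Ring.prime p"
    and "\<exists>P. p_subgroup G p P \<and> P \<noteq> {\<one>\<^bsub>G\<^esub>} \<and> P \<subseteq> centralizer G (carrier G)"
  shows "euler_char_is (nonid_p_subgroups G p) (F_hom G) 1
       \<and> euler_char_is (nonid_p_subgroups G p) (L_hom G p)
           (1 / (real (card (carrier G)) / real (card (Op G p (carrier G)))))"
proof -
  interpret group G by fact
  obtain P where P: "P \<in> nonid_p_subgroups G p" and P_central: "P \<subseteq> centralizer G (carrier G)"
    using assms(4) by (auto simp: nonid_p_subgroups_def)
  note euler_char = euler_char_is_centralizer_orbit_category[OF assms(2,3) P P_central]
  have "card (carrier G) > 0"
    using assms(2) one_closed by (auto simp: card_gt_0_iff)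
  moreover have "F_hom G = (\<lambda>H K. left_orbits G ((\<lambda>Y. Y) (centralizer G H)) (transporter G H K))"
    by (simp add: fun_eq_iff F_hom_def)
  moreover have "L_hom G p = (\<lambda>H K. left_orbits G (Op G p (centralizer G H)) (transporter G H K))"
    by (simp add: fun_eq_iff L_hom_def)
  moreover have "subgroup (Op G p Y) G \<and> Op G p Y \<subseteq> Y" if "subgroup Y G" for Y
    using subgroup_Op[OF that] by blast
  ultimately show ?thesis
    using euler_char[of "\<lambda>Y. Y"] euler_char[of "Op G p", OF _ Op_set_conjugate] by simp
qed

end
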